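(* Let $\mu_1,\mu_2,\mu_3\in\mathbb{R}$, $\sigma_1,\sigma_2,\sigma_3>0$ and $k>0$. Consider three stocks with positive prices $p_{it}$, $i=1,2,3$, at discrete times $t=0,1,2,\dots$, with deterministic equal initial log-prices $\log p_{10}=\log p_{20}=\log p_{30}$ and $$\log(p_{i,t+1})=\log(p_{it})+\mu_i+\delta_{i,t+1},$$ where all $\delta_{it}$ are independent with $\delta_{it}\sim N(0,\sigma_i^2)$. Define spreads $$\epsilon_{at}=\log(p_{2t})-\log(p_{1t})-(\mu_2-\mu_1)t,\qquad \epsilon_{bt}=\log(p_{3t})-\log(p_{1t})-(\mu_3-\mu_1)t,$$ with standard deviations $\sigma_a=\sqrt{t(\sigma_1^2+\sigma_2^2)}$ and $\sigma_b=\sqrt{t(\sigma_1^2+\sigma_3^2)}$, signals $$S_{at}=\mathbb{1}\{\epsilon_{at}\le -k\sigma_a\}-\mathbb{1}\{\epsilon_{at}\ge k\sigma_a\},\qquad S_{bt}=\mathbb{1}\{\epsilon_{bt}\le -k\sigma_b\}-\mathbb{1}\{\epsilon_{bt}\ge k\sigma_b\},$$ stock returns $r_{i,t+1}=p_{i,t+1}/p_{it}-1$, and pair returns $r_{a,t+1}=S_{at}(r_{2,t+1}-r_{1,t+1})$, $r_{b,t+1}=S_{bt}(r_{3,t+1}-r_{1,t+1})$. Let $(Z_a,Z_b)$ be zero-mean jointly normal with unit variances and correlation $\rho=\sigma_1^2/\sqrt{(\sigma_1^2+\sigma_2^2)(\sigma_1^2+\sigma_3^2)}$. Then for every $t\ge1$,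 $$\operatorname{Cov}(r_{a,t+1},r_{b,t+1})=2\Big(\mathbf{P}(Z_a\ge k,\,Z_b\ge k)-\mathbf{P}(Z_a\ge k,\,Z_b\le -k)\Big)\Big(e^{\mu_2+\mu_3+\sigma_2^2/2+\sigma_3^2/2}-e^{\mu_1+\mu_3+\sigma_1^2/2+\sigma_3^2/2}-e^{\mu_1+\mu_2+\sigma_1^2/2+\sigma_2^2/2}+e^{2\mu_1+2\sigma_1^2}\Big).$$
   Context: Pairs $a=$ (stock 1, stock 2) and $b=$ (stock 1, stock 3) are two non-cointegrated pairs sharing stock 1; each log-price follows an independent Gaussian random walk with drift. *)

theory Defs
  imports "HOL-Probability.Probability"
begin

definition cov :: "'a measure \<Rightarrow> ('a \<Rightarrow> real) \<Rightarrow> ('a \<Rightarrow> real) \<Rightarrow> real" where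
  "cov M X Y = integral\<^sup>L M (\<lambda>w. X w * Y w) - integral\<^sup>L M X * integral\<^sup>L M Y"

definition signal :: "real \<Rightarrow> real \<Rightarrow> real \<Rightarrow> real" where
  "signal k s eps = (if eps \<le> - k * s then 1 else 0) - (if eps \<ge> k * s then 1 else 0)"

definition bvn_density :: "real \<Rightarrow> real \<Rightarrow> real \<Rightarrow> real" where
  "bvn_density \<rho> x y =
     1 / (2 * pi * sqrt (1 - \<rho>\<^sup>2)) * exp (- (x\<^sup>2 - 2 * \<rho> * x * y + y\<^sup>2) / (2 * (1 - \<rho>\<^sup>2)))"

definition bvn :: "real \<Rightarrow> (real \<times> real) measure" where
  "bvn \<rho> = density lborel (\<lambda>z. ennreal (bvn_density \<rho> (fst z) (snd z)))"

end

(*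
  Write U_i for the sum of the first t shocks of stock i and D_i for its shock at time t + 1.
  Once the drifts are removed, the spreads are U_2 - U_1 and U_3 - U_1, so both signals are
  functions of (U_1, U_2, U_3), whereas the gross returns R_i = exp (mu_i + D_i) are functions of
  (D_1, D_2, D_3). The two blocks are independent, hence the covariance of the pair returns is
  E[S_a S_b] E[(R_2 - R_1) (R_3 - R_1)] - E[S_a] E[R_2 - R_1] E[S_b] E[R_3 - R_1].
  Integrating U_1 out of the joint density shows that the standardised spreads have the bivariate
  normal law with correlation rho. This law is invariant under z -> -z, which gives E[S_a] = 0 and
  E[S_a S_b] = 2 (P(Z_a >= k, Z_b >= k) - P(Z_a >= k, Z_b <= -k)). The second factor is a sum of
  lognormal moments.
*)

theory Submission
  imports Defs
begin

section \<open>Gaussian integrals\<close>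

lemma nn_integral_exp_neg_quadratic:
  fixes A B C :: real
  assumes A: "A > 0"
  shows "(\<integral>\<^sup>+u. ennreal (exp (-(A * u\<^sup>2 + B * u + C))) \<partial>lborel) = ennreal (sqrt (pi / A) * exp (B\<^sup>2 / (4 * A) - C))"
proof -
  define s where "s = sqrt (1 / (2 * A))"
  define m where "m = - B / (2 * A)"
  have s2: "s\<^sup>2 = 1 / (2 * A)" and s: "s > 0"
    using A by (simp_all add: s_def)
  have K: "sqrt (pi / A) * exp (B\<^sup>2 / (4 * A) - C) > 0"
    using A by simp
  have "exp (-(A * u\<^sup>2 + B * u + C)) = sqrt (pi / A) * exp (B\<^sup>2 / (4 * A) - C) * normal_density m s u" for u
  proof -
    have "sqrt (pi / A) * exp (B\<^sup>2 / (4 * A) - C) * normal_density m s u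
        = exp (B\<^sup>2 / (4 * A) - C + - (u - m)\<^sup>2 / (2 * s\<^sup>2))"
      unfolding normal_density_def s2 using A by (simp add: exp_add[symmetric])
    also have "B\<^sup>2 / (4 * A) - C + - (u - m)\<^sup>2 / (2 * s\<^sup>2) = -(A * u\<^sup>2 + B * u + C)"
      unfolding s2 m_def using A by (simp add: field_simps power2_eq_square)
    finally show ?thesis by simp
  qed
  then have "(\<integral>\<^sup>+u. ennreal (exp (-(A * u\<^sup>2 + B * u + C))) \<partial>lborel)
      = (\<integral>\<^sup>+u. ennreal (sqrt (pi / A) * exp (B\<^sup>2 / (4 * A) - C)) * ennreal (normal_density m s u) \<partial>lborel)"
    using K by (simp add: ennreal_mult')
  also have "\<dots> = ennreal (sqrt (pi / A) * exp (B\<^sup>2 / (4 * A) - C))"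
    using s by (simp add: nn_integral_cmult nn_integral_eq_integral)
  finally show ?thesis .
qed

lemma (in prob_space)
  assumes X: "distributed M lborel X (normal_density 0 s)" and s: "s > 0"
  shows integrable_exp_affine_normal: "integrable M (\<lambda>w. exp (a + b * X w))"
    and expectation_exp_affine_normal: "expectation (\<lambda>w. exp (a + b * X w)) = exp (a + b\<^sup>2 * s\<^sup>2 / 2)"
proof -
  have tilt: "normal_density 0 s x * exp (a + b * x) = exp (a + b\<^sup>2 * s\<^sup>2 / 2) * normal_density (b * s\<^sup>2) s x" for x
  proof -
    have "-(x - 0)\<^sup>2 / (2 * s\<^sup>2) + (a + b * x) = (a + b\<^sup>2 * s\<^sup>2 / 2) + -(x - b * s\<^sup>2)\<^sup>2 / (2 * s\<^sup>2)"
      using s by (simp add: field_simps power2_eq_square)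
    then show ?thesis
      unfolding normal_density_def by (simp add: exp_add[symmetric] mult_ac)
  qed
  show "integrable M (\<lambda>w. exp (a + b * X w))"
    using s by (subst distributed_integrable[OF X, symmetric]) (auto simp: tilt)
  show "expectation (\<lambda>w. exp (a + b * X w)) = exp (a + b\<^sup>2 * s\<^sup>2 / 2)"
    using s by (subst distributed_integral[OF X, symmetric]) (auto simp: tilt)
qed

section \<open>The joint law of two standardised differences of independent normals\<close>

lemma one_minus_corr_sq:
  fixes v1 v2 v3 sa sb :: real
  assumes "sa > 0" "sb > 0" "sa\<^sup>2 = v1 + v2" "sb\<^sup>2 = v1 + v3"
  shows "1 - (v1 / (sa * sb))\<^sup>2 = (v1 * v2 + v1 * v3 + v2 * v3) / (sa\<^sup>2 * sb\<^sup>2)"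
proof -
  have "v1 * v2 + v1 * v3 + v2 * v3 = sa\<^sup>2 * sb\<^sup>2 - v1\<^sup>2"
    using assms(3,4) by (simp add: algebra_simps power2_eq_square)
  then show ?thesis
    using assms(1,2) by (simp add: field_simps power2_eq_square)
qed

(* With v_i = a_i^2, A, B, C are the coefficients of the quadratic exponent in
   normal_densities_product_eq_exp_quadratic below; these two identities complete the square in u. *)
lemma bvn_exponent_identity:
  fixes v1 v2 v3 sa sb x y :: real
  assumes v: "v1 > 0" "v2 > 0" "v3 > 0" and s: "sa > 0" "sb > 0" "sa\<^sup>2 = v1 + v2" "sb\<^sup>2 = v1 + v3"
  defines "A \<equiv> 1 / (2 * v1) + 1 / (2 * v2) + 1 / (2 * v3)"
    and "B \<equiv> sa * x / v2 + sb * y / v3" and "C \<equiv> sa\<^sup>2 * x\<^sup>2 / (2 * v2) + sb\<^sup>2 * y\<^sup>2 / (2 * v3)"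
    and "\<rho> \<equiv> v1 / (sa * sb)"
  shows "B\<^sup>2 / (4 * A) - C = -(x\<^sup>2 - 2 * \<rho> * x * y + y\<^sup>2) / (2 * (1 - \<rho>\<^sup>2))"
proof -
  define P where "P = v1 * v2 + v1 * v3 + v2 * v3"
  have P: "P > 0"
    using v by (simp add: P_def add_pos_pos)
  have A: "A = P / (2 * v1 * v2 * v3)"
    using v by (simp add: A_def P_def field_simps)
  have v2: "v2 = sa\<^sup>2 - v1" and v3: "v3 = sb\<^sup>2 - v1"
    using s(3,4) by simp_all
  have corr: "1 - \<rho>\<^sup>2 = P / (sa\<^sup>2 * sb\<^sup>2)"
    unfolding \<rho>_def P_def by (rule one_minus_corr_sq[OF s])
  have "B\<^sup>2 / (4 * A) - C = (v1 * (sa * x * v3 + sb * y * v2)\<^sup>2 - P * (sa\<^sup>2 * x\<^sup>2 * v3 + sb\<^sup>2 * y\<^sup>2 * v2)) / (2 * P * v2 * v3)"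
    unfolding A B_def C_def using v P by (simp add: field_simps power2_eq_square)
  also have "v1 * (sa * x * v3 + sb * y * v2)\<^sup>2 - P * (sa\<^sup>2 * x\<^sup>2 * v3 + sb\<^sup>2 * y\<^sup>2 * v2)
      = - v2 * v3 * (sa\<^sup>2 * sb\<^sup>2 * x\<^sup>2 - 2 * v1 * sa * sb * x * y + sa\<^sup>2 * sb\<^sup>2 * y\<^sup>2)"
    unfolding P_def v2 v3 by algebra
  also have "- v2 * v3 * (sa\<^sup>2 * sb\<^sup>2 * x\<^sup>2 - 2 * v1 * sa * sb * x * y + sa\<^sup>2 * sb\<^sup>2 * y\<^sup>2) / (2 * P * v2 * v3)
      = -(x\<^sup>2 - 2 * \<rho> * x * y + y\<^sup>2) / (2 * (1 - \<rho>\<^sup>2))"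
    using v s(1,2) P unfolding corr by (simp add: \<rho>_def field_simps power2_eq_square)
  finally show ?thesis .
qed

lemma bvn_normalisation_identity:
  fixes v1 v2 v3 sa sb :: real
  assumes v: "v1 > 0" "v2 > 0" "v3 > 0" and s: "sa > 0" "sb > 0" "sa\<^sup>2 = v1 + v2" "sb\<^sup>2 = v1 + v3"
  defines "A \<equiv> 1 / (2 * v1) + 1 / (2 * v2) + 1 / (2 * v3)"
    and "K \<equiv> sa * sb / (sqrt (2 * pi * v1) * sqrt (2 * pi * v2) * sqrt (2 * pi * v3))"
    and "\<rho> \<equiv> v1 / (sa * sb)"
  shows "K * sqrt (pi / A) = 1 / (2 * pi * sqrt (1 - \<rho>\<^sup>2))"
proof -
  define P where "P = v1 * v2 + v1 * v3 + v2 * v3"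
  have P: "P > 0"
    using v by (simp add: P_def add_pos_pos)
  have corr: "1 - \<rho>\<^sup>2 = P / (sa\<^sup>2 * sb\<^sup>2)"
    unfolding \<rho>_def P_def by (rule one_minus_corr_sq[OF s])
  have corr_pos: "1 - \<rho>\<^sup>2 > 0"
    unfolding corr using P s(1,2) by simp
  have A: "A = P / (2 * v1 * v2 * v3)"
    using v by (simp add: A_def P_def field_simps)
  have A_pos: "A > 0"
    unfolding A using P v by simp
  have K_pos: "K > 0"
    unfolding K_def using v s(1,2) by simp
  have sq1: "(K * sqrt (pi / A))\<^sup>2 = sa\<^sup>2 * sb\<^sup>2 / (4 * pi\<^sup>2 * P)"
  proof -
    have "(K * sqrt (pi / A))\<^sup>2 = K\<^sup>2 * (pi / A)"
      using A_pos by (simp add: power_mult_distrib)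
    also have "K\<^sup>2 = sa\<^sup>2 * sb\<^sup>2 / ((2 * pi * v1) * (2 * pi * v2) * (2 * pi * v3))"
      unfolding K_def using v by (simp add: power_mult_distrib power_divide)
    finally show ?thesis
      unfolding A using v P by (simp add: field_simps power2_eq_square)
  qed
  have sq2: "(1 / (2 * pi * sqrt (1 - \<rho>\<^sup>2)))\<^sup>2 = sa\<^sup>2 * sb\<^sup>2 / (4 * pi\<^sup>2 * P)"
    using corr_pos unfolding power_divide power_mult_distrib real_sqrt_pow2[OF less_imp_le[OF corr_pos]] corr
    using s(1,2) P by (simp add: field_simps power2_eq_square)
  show ?thesis
    by (rule power2_eq_imp_eq) (use sq1 sq2 K_pos A_pos corr_pos in auto)
qed

lemma normal_densities_product_eq_exp_quadratic:
  fixes a1 a2 a3 sa sb x y u :: real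
  assumes "a1 > 0" "a2 > 0" "a3 > 0"
  defines "A \<equiv> 1 / (2 * a1\<^sup>2) + 1 / (2 * a2\<^sup>2) + 1 / (2 * a3\<^sup>2)"
    and "B \<equiv> sa * x / a2\<^sup>2 + sb * y / a3\<^sup>2"
    and "C \<equiv> sa\<^sup>2 * x\<^sup>2 / (2 * a2\<^sup>2) + sb\<^sup>2 * y\<^sup>2 / (2 * a3\<^sup>2)"
    and "K \<equiv> sa * sb / (sqrt (2 * pi * a1\<^sup>2) * sqrt (2 * pi * a2\<^sup>2) * sqrt (2 * pi * a3\<^sup>2))"
  shows "normal_density 0 a1 u * (sa * normal_density 0 a2 (u + sa * x)) * (sb * normal_density 0 a3 (u + sb * y))
    = K * exp (-(A * u\<^sup>2 + B * u + C))"
proof -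
  have "normal_density 0 a1 u * (sa * normal_density 0 a2 (u + sa * x)) * (sb * normal_density 0 a3 (u + sb * y))
      = K * (exp (-u\<^sup>2 / (2 * a1\<^sup>2)) * exp (-(u + sa * x)\<^sup>2 / (2 * a2\<^sup>2)) * exp (-(u + sb * y)\<^sup>2 / (2 * a3\<^sup>2)))"
    unfolding normal_density_def K_def by simp
  also have "\<dots> = K * exp (-u\<^sup>2 / (2 * a1\<^sup>2) + -(u + sa * x)\<^sup>2 / (2 * a2\<^sup>2) + -(u + sb * y)\<^sup>2 / (2 * a3\<^sup>2))"
    by (simp only: exp_add)
  also have "-u\<^sup>2 / (2 * a1\<^sup>2) + -(u + sa * x)\<^sup>2 / (2 * a2\<^sup>2) + -(u + sb * y)\<^sup>2 / (2 * a3\<^sup>2) = -(A * u\<^sup>2 + B * u + C)"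
    unfolding A_def B_def C_def using assms by (simp add: field_simps power2_eq_square)
  finally show ?thesis .
qed

(* For independent centred normal U, V, W with standard deviations a1, a2, a3, the integrand is the
   joint density of (U, (V - U) / sa, (W - U) / sb) at (u, x, y). *)
lemma nn_integral_normal_densities_eq_bvn_density:
  fixes a1 a2 a3 x y :: real
  assumes a: "a1 > 0" "a2 > 0" "a3 > 0"
    and sa: "sa = sqrt (a1\<^sup>2 + a2\<^sup>2)" and sb: "sb = sqrt (a1\<^sup>2 + a3\<^sup>2)" and \<rho>: "\<rho> = a1\<^sup>2 / (sa * sb)"
  shows "(\<integral>\<^sup>+u. ennreal (normal_density 0 a1 u * (sa * normal_density 0 a2 (u + sa * x))
            * (sb * normal_density 0 a3 (u + sb * y))) \<partial>lborel) = ennreal (bvn_density \<rho> x y)"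
proof -
  define A where "A = 1 / (2 * a1\<^sup>2) + 1 / (2 * a2\<^sup>2) + 1 / (2 * a3\<^sup>2)"
  define B where "B = sa * x / a2\<^sup>2 + sb * y / a3\<^sup>2"
  define C where "C = sa\<^sup>2 * x\<^sup>2 / (2 * a2\<^sup>2) + sb\<^sup>2 * y\<^sup>2 / (2 * a3\<^sup>2)"
  define K where "K = sa * sb / (sqrt (2 * pi * a1\<^sup>2) * sqrt (2 * pi * a2\<^sup>2) * sqrt (2 * pi * a3\<^sup>2))"
  have s: "sa > 0" "sb > 0" "sa\<^sup>2 = a1\<^sup>2 + a2\<^sup>2" "sb\<^sup>2 = a1\<^sup>2 + a3\<^sup>2"
    using a by (auto simp: sa sb intro!: add_pos_pos)
  have A_pos: "A > 0" and K_pos: "K > 0"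
    using a s by (simp_all add: A_def K_def add_pos_pos)
  have "normal_density 0 a1 u * (sa * normal_density 0 a2 (u + sa * x)) * (sb * normal_density 0 a3 (u + sb * y))
      = K * exp (-(A * u\<^sup>2 + B * u + C))" for u
    unfolding A_def B_def C_def K_def by (rule normal_densities_product_eq_exp_quadratic[OF a])
  then have "(\<integral>\<^sup>+u. ennreal (normal_density 0 a1 u * (sa * normal_density 0 a2 (u + sa * x))
            * (sb * normal_density 0 a3 (u + sb * y))) \<partial>lborel)
      = (\<integral>\<^sup>+u. ennreal K * ennreal (exp (-(A * u\<^sup>2 + B * u + C))) \<partial>lborel)"
    using K_pos by (simp add: ennreal_mult')
  also have "\<dots> = ennreal K * ennreal (sqrt (pi / A) * exp (B\<^sup>2 / (4 * A) - C))"
    by (subst nn_integral_cmult) (measurable, simp only: nn_integral_exp_neg_quadratic[OF A_pos])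
  also have "\<dots> = ennreal ((K * sqrt (pi / A)) * exp (B\<^sup>2 / (4 * A) - C))"
    using K_pos A_pos by (simp add: ennreal_mult'[symmetric] mult.assoc)
  also have "K * sqrt (pi / A) = 1 / (2 * pi * sqrt (1 - \<rho>\<^sup>2))"
    unfolding K_def A_def \<rho> by (rule bvn_normalisation_identity) (use a s in auto)
  also have "B\<^sup>2 / (4 * A) - C = -(x\<^sup>2 - 2 * \<rho> * x * y + y\<^sup>2) / (2 * (1 - \<rho>\<^sup>2))"
    unfolding A_def B_def C_def \<rho> by (rule bvn_exponent_identity) (use a s in auto)
  finally show ?thesis
    unfolding bvn_density_def by simp
qed

lemma (in prob_space) indep_var_sets_cong:
  assumes "indep_var S X T Y" "sets S' = sets S" "sets T' = sets T"
  shows "indep_var S' X T' Y"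
proof -
  have "indep_vars (case_bool S' T') (case_bool X Y) UNIV = indep_vars (case_bool S T) (case_bool X Y) UNIV"
    unfolding indep_vars_def2 using assms(2,3)
    by (intro conj_cong indep_sets_cong ball_cong refl) (auto split: bool.split cong: measurable_cong_sets)
  then show ?thesis using assms(1) unfolding indep_var_def by simp
qed

lemma nn_integral_pair_lborel:
  fixes h :: "real \<times> real \<Rightarrow> ennreal"
  assumes [measurable]: "h \<in> borel_measurable (lborel \<Otimes>\<^sub>M lborel)"
  shows "(\<integral>\<^sup>+z. h z \<partial>lborel) = (\<integral>\<^sup>+x. \<integral>\<^sup>+y. h (x, y) \<partial>lborel \<partial>lborel)"
  by (subst lborel_prod[symmetric], subst lborel.nn_integral_fst[symmetric]) auto

(* indep_var only relates random variables with values in one type, so the independence of U and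
   (V, W) is stated through their joint distribution. *)
lemma (in prob_space) nn_integral_indep_triple:
  fixes U V W :: "'a \<Rightarrow> real" and f1 f2 f3 :: "real \<Rightarrow> ennreal"
  assumes U: "distributed M lborel U f1" and V: "distributed M lborel V f2" and W: "distributed M lborel W f3"
    and indep_U_VW: "distr M lborel U \<Otimes>\<^sub>M distr M lborel (\<lambda>w. (V w, W w))
      = distr M (lborel \<Otimes>\<^sub>M lborel) (\<lambda>w. (U w, V w, W w))"
    and indep_V_W: "indep_var borel V borel W"
    and G: "G \<in> borel_measurable borel"
  shows "(\<integral>\<^sup>+w. G (U w, V w, W w) \<partial>M) =
    (\<integral>\<^sup>+u. \<integral>\<^sup>+v. \<integral>\<^sup>+x. f1 u * f2 v * f3 x * G (u, v, x) \<partial>lborel \<partial>lborel \<partial>lborel)"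
proof -
  note [measurable] = distributed_borel_measurable[OF U] distributed_borel_measurable[OF V]
    distributed_borel_measurable[OF W]
  have [measurable]: "G \<in> borel_measurable (lborel \<Otimes>\<^sub>M (lborel \<Otimes>\<^sub>M lborel))"
    using G by (simp add: lborel_prod)
  have "indep_var lborel V lborel W"
    by (rule indep_var_sets_cong[OF indep_V_W]) simp_all
  then have "distributed M (lborel \<Otimes>\<^sub>M lborel) (\<lambda>w. (V w, W w)) (\<lambda>(v, x). f2 v * f3 x)"
    by (intro distributed_joint_indep V W) (auto intro: lborel.sigma_finite_measure_axioms)
  then have VW: "distributed M lborel (\<lambda>w. (V w, W w)) (\<lambda>(v, x). f2 v * f3 x)"
    by (simp add: lborel_prod)
  have UVW: "distributed M (lborel \<Otimes>\<^sub>M lborel) (\<lambda>w. (U w, V w, W w))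
      (\<lambda>(u, z). f1 u * (case z of (v, x) \<Rightarrow> f2 v * f3 x))"
    by (rule distributed_joint_indep'[OF _ _ U VW indep_U_VW]) (auto intro: lborel.sigma_finite_measure_axioms)
  have "(\<integral>\<^sup>+w. G (U w, V w, W w) \<partial>M)
      = (\<integral>\<^sup>+q. (\<lambda>(u, z). f1 u * (case z of (v, x) \<Rightarrow> f2 v * f3 x)) q * G q \<partial>(lborel \<Otimes>\<^sub>M lborel))"
    by (rule distributed_nn_integral[OF UVW, symmetric]) (simp add: G lborel_prod)
  also have "\<dots> = (\<integral>\<^sup>+u. \<integral>\<^sup>+z. f1 u * (case z of (v, x) \<Rightarrow> f2 v * f3 x) * G (u, z) \<partial>lborel \<partial>lborel)"
    by (subst lborel.nn_integral_fst[symmetric]) (simp only: lborel_prod[symmetric], measurable)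
  also have "\<dots> = (\<integral>\<^sup>+u. \<integral>\<^sup>+v. \<integral>\<^sup>+x. f1 u * f2 v * f3 x * G (u, v, x) \<partial>lborel \<partial>lborel \<partial>lborel)"
    by (intro nn_integral_cong, subst nn_integral_pair_lborel) (measurable, simp add: mult.assoc)
  finally show ?thesis .
qed

lemma nn_integral_lborel_affine_pair:
  fixes h :: "real \<times> real \<Rightarrow> ennreal" and c d :: real
  assumes [measurable]: "h \<in> borel_measurable (lborel \<Otimes>\<^sub>M lborel)" and c: "c > 0" and d: "d > 0"
  shows "(\<integral>\<^sup>+v. \<integral>\<^sup>+x. h (v, x) \<partial>lborel \<partial>lborel)
       = (\<integral>\<^sup>+p. \<integral>\<^sup>+q. ennreal (c * d) * h (s + c * p, t + d * q) \<partial>lborel \<partial>lborel)"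
proof -
  have inner: "(\<integral>\<^sup>+x. h (v, x) \<partial>lborel) = (\<integral>\<^sup>+q. ennreal d * h (v, t + d * q) \<partial>lborel)" for v
    using d by (subst nn_integral_real_affine[where c = d and t = t]) (auto simp: nn_integral_cmult)
  have "(\<integral>\<^sup>+v. \<integral>\<^sup>+x. h (v, x) \<partial>lborel \<partial>lborel) = (\<integral>\<^sup>+v. \<integral>\<^sup>+q. ennreal d * h (v, t + d * q) \<partial>lborel \<partial>lborel)"
    by (simp add: inner)
  also have "\<dots> = (\<integral>\<^sup>+p. ennreal c * \<integral>\<^sup>+q. ennreal d * h (s + c * p, t + d * q) \<partial>lborel \<partial>lborel)"
    using c by (subst nn_integral_real_affine[where c = c and t = s]) (auto simp: nn_integral_cmult)
  also have "\<dots> = (\<integral>\<^sup>+p. \<integral>\<^sup>+q. ennreal (c * d) * h (s + c * p, t + d * q) \<partial>lborel \<partial>lborel)"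
    using c d by (intro nn_integral_cong) (simp add: nn_integral_cmult[symmetric] ennreal_mult mult.assoc)
  finally show ?thesis .
qed

lemma nn_integral_normal_differences:
  fixes a1 a2 a3 sa sb \<rho> :: real and g :: "real \<times> real \<Rightarrow> ennreal"
  assumes a1: "a1 > 0" and a2: "a2 > 0" and a3: "a3 > 0"
    and sa: "sa = sqrt (a1\<^sup>2 + a2\<^sup>2)" and sb: "sb = sqrt (a1\<^sup>2 + a3\<^sup>2)" and \<rho>: "\<rho> = a1\<^sup>2 / (sa * sb)"
    and [measurable]: "g \<in> borel_measurable (lborel \<Otimes>\<^sub>M lborel)"
  shows "(\<integral>\<^sup>+u. \<integral>\<^sup>+v. \<integral>\<^sup>+x. ennreal (normal_density 0 a1 u) * ennreal (normal_density 0 a2 v)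
             * ennreal (normal_density 0 a3 x) * g ((v - u) / sa, (x - u) / sb) \<partial>lborel \<partial>lborel \<partial>lborel)
       = (\<integral>\<^sup>+z. ennreal (bvn_density \<rho> (fst z) (snd z)) * g z \<partial>lborel)"
proof -
  let ?f1 = "normal_density 0 a1" and ?f2 = "normal_density 0 a2" and ?f3 = "normal_density 0 a3"
  have sa_pos: "sa > 0" and sb_pos: "sb > 0"
    using assms by (auto intro!: add_pos_pos)
  define K where "K u p q = ennreal (?f1 u * (sa * ?f2 (u + sa * p)) * (sb * ?f3 (u + sb * q))) * g (p, q)" for u p q
  have [measurable]: "(\<lambda>(u, p, q). K u p q) \<in> borel_measurable (lborel \<Otimes>\<^sub>M (lborel \<Otimes>\<^sub>M lborel))"
    unfolding K_def by measurable
  have substitute: "(\<integral>\<^sup>+v. \<integral>\<^sup>+x. ennreal (?f1 u) * ennreal (?f2 v) * ennreal (?f3 x) * g ((v - u) / sa, (x - u) / sb) \<partial>lborel \<partial>lborel)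
      = (\<integral>\<^sup>+p. \<integral>\<^sup>+q. K u p q \<partial>lborel \<partial>lborel)" for u
  proof -
    define h where "h z = ennreal (?f1 u) * ennreal (?f2 (fst z)) * ennreal (?f3 (snd z))
      * g ((fst z - u) / sa, (snd z - u) / sb)" for z
    have "(\<integral>\<^sup>+v. \<integral>\<^sup>+x. h (v, x) \<partial>lborel \<partial>lborel)
        = (\<integral>\<^sup>+p. \<integral>\<^sup>+q. ennreal (sa * sb) * h (u + sa * p, u + sb * q) \<partial>lborel \<partial>lborel)"
      by (rule nn_integral_lborel_affine_pair) (use sa_pos sb_pos in \<open>auto simp: h_def\<close>)
    moreover have "ennreal (sa * sb) * h (u + sa * p, u + sb * q) = K u p q" for p q
      using sa_pos sb_pos by (simp add: h_def K_def ennreal_mult mult_ac)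
    ultimately show ?thesis
      by (simp add: h_def)
  qed
  have "(\<integral>\<^sup>+u. \<integral>\<^sup>+p. \<integral>\<^sup>+q. K u p q \<partial>lborel \<partial>lborel \<partial>lborel)
       = (\<integral>\<^sup>+p. \<integral>\<^sup>+u. \<integral>\<^sup>+q. K u p q \<partial>lborel \<partial>lborel \<partial>lborel)"
    by (rule lborel_pair.Fubini'[of "\<lambda>p u. \<integral>\<^sup>+q. K u p q \<partial>lborel"]) (unfold K_def, measurable)
  also have "\<dots> = (\<integral>\<^sup>+p. \<integral>\<^sup>+q. \<integral>\<^sup>+u. K u p q \<partial>lborel \<partial>lborel \<partial>lborel)"
    by (intro nn_integral_cong lborel_pair.Fubini'[of "\<lambda>q u. K u _ q"]) (unfold K_def, measurable)
  also have "\<dots> = (\<integral>\<^sup>+p. \<integral>\<^sup>+q. ennreal (bvn_density \<rho> p q) * g (p, q) \<partial>lborel \<partial>lborel)"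
    unfolding K_def
    by (subst nn_integral_multc, measurable,
        simp add: nn_integral_normal_densities_eq_bvn_density[OF a1 a2 a3 sa sb \<rho>])
  also have "\<dots> = (\<integral>\<^sup>+z. ennreal (bvn_density \<rho> (fst z) (snd z)) * g z \<partial>lborel)"
    by (subst nn_integral_pair_lborel) (auto simp: bvn_density_def)
  finally show ?thesis
    by (simp add: substitute)
qed

lemma borel_measurable_bvn_density [measurable]:
  "(\<lambda>z. bvn_density \<rho> (fst z) (snd z)) \<in> borel_measurable borel"
proof -
  have "(\<lambda>z. bvn_density \<rho> (fst z) (snd z)) \<in> borel_measurable (lborel \<Otimes>\<^sub>M lborel)"
    unfolding bvn_density_def by measurable
  then show ?thesis by (simp add: lborel_prod)
qed

lemma space_bvn [simp]: "space (bvn \<rho>) = UNIV"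
  by (simp add: bvn_def)

lemma sets_bvn [simp]: "sets (bvn \<rho>) = sets borel"
  by (simp add: bvn_def)

lemma (in prob_space) distr_normal_differences_eq_bvn:
  fixes U V W :: "'a \<Rightarrow> real"
  assumes a1: "a1 > 0" and a2: "a2 > 0" and a3: "a3 > 0"
    and sa: "sa = sqrt (a1\<^sup>2 + a2\<^sup>2)" and sb: "sb = sqrt (a1\<^sup>2 + a3\<^sup>2)" and \<rho>: "\<rho> = a1\<^sup>2 / (sa * sb)"
    and U: "distributed M lborel U (normal_density 0 a1)"
    and V: "distributed M lborel V (normal_density 0 a2)"
    and W: "distributed M lborel W (normal_density 0 a3)"
    and indep_U_VW: "distr M lborel U \<Otimes>\<^sub>M distr M lborel (\<lambda>w. (V w, W w))
      = distr M (lborel \<Otimes>\<^sub>M lborel) (\<lambda>w. (U w, V w, W w))"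
    and indep_V_W: "indep_var borel V borel W"
  shows "distr M lborel (\<lambda>w. ((V w - U w) / sa, (W w - U w) / sb)) = bvn \<rho>"
proof (rule measure_eqI)
  have [measurable]: "U \<in> borel_measurable M" "V \<in> borel_measurable M" "W \<in> borel_measurable M"
    using U V W by (auto dest: distributed_measurable)
  show "sets (distr M lborel (\<lambda>w. ((V w - U w) / sa, (W w - U w) / sb))) = sets (bvn \<rho>)"
    by (simp add: bvn_def)
  fix A assume "A \<in> sets (distr M lborel (\<lambda>w. ((V w - U w) / sa, (W w - U w) / sb)))"
  then have [measurable]: "A \<in> sets borel" by simp
  have "emeasure (distr M lborel (\<lambda>w. ((V w - U w) / sa, (W w - U w) / sb))) A
      = (\<integral>\<^sup>+w. (\<lambda>(u, v, x). indicator A ((v - u) / sa, (x - u) / sb)) (U w, V w, W w) \<partial>M)"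
    by (subst nn_integral_indicator[symmetric], simp, subst nn_integral_distr) auto
  also have "\<dots> = (\<integral>\<^sup>+u. \<integral>\<^sup>+v. \<integral>\<^sup>+x. ennreal (normal_density 0 a1 u) * ennreal (normal_density 0 a2 v)
      * ennreal (normal_density 0 a3 x) * indicator A ((v - u) / sa, (x - u) / sb) \<partial>lborel \<partial>lborel \<partial>lborel)"
  proof (subst nn_integral_indep_triple[OF U V W indep_U_VW indep_V_W])
    have "(\<lambda>(u, v, x). indicator A ((v - u) / sa, (x - u) / sb) :: ennreal) \<in> borel_measurable (lborel \<Otimes>\<^sub>M (lborel \<Otimes>\<^sub>M lborel))"
      by measurable
    then show "(\<lambda>(u, v, x). indicator A ((v - u) / sa, (x - u) / sb) :: ennreal) \<in> borel_measurable borel"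
      by (simp add: lborel_prod)
  qed simp
  also have "\<dots> = (\<integral>\<^sup>+z. ennreal (bvn_density \<rho> (fst z) (snd z)) * indicator A z \<partial>lborel)"
    by (rule nn_integral_normal_differences[OF a1 a2 a3 sa sb \<rho>]) (simp add: lborel_prod)
  also have "\<dots> = emeasure (bvn \<rho>) A"
    unfolding bvn_def by (subst emeasure_density) auto
  finally show "emeasure (distr M lborel (\<lambda>w. ((V w - U w) / sa, (W w - U w) / sb))) A = emeasure (bvn \<rho>) A" .
qed

section \<open>Symmetry of the bivariate normal law and the trading signal\<close>

lemma nn_integral_lborel_uminus:
  fixes f :: "'a::euclidean_space \<Rightarrow> ennreal"
  assumes [measurable]: "f \<in> borel_measurable borel"
  shows "(\<integral>\<^sup>+x. f x \<partial>lborel) = (\<integral>\<^sup>+x. f (- x) \<partial>lborel)"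
proof -
  note lborel_affine[of "-1::real" "0::'a", simplified]
  then have *: "lborel = distr lborel borel (\<lambda>x::'a. - x)"
    by (simp only: density_1)
  show ?thesis
    by (subst (1) *) (simp add: nn_integral_distr)
qed

lemma bvn_density_uminus: "bvn_density \<rho> (- x) (- y) = bvn_density \<rho> x y"
  unfolding bvn_density_def by simp

lemma emeasure_bvn_uminus:
  assumes [measurable]: "A \<in> sets borel"
  shows "emeasure (bvn \<rho>) (uminus -` A) = emeasure (bvn \<rho>) A"
proof -
  have "uminus -` A \<in> sets borel"
    using measurable_sets[of uminus borel borel A]
    by (simp add: continuous_on_minus borel_measurable_continuous_onI)
  then have "emeasure (bvn \<rho>) (uminus -` A) = (\<integral>\<^sup>+z. ennreal (bvn_density \<rho> (fst z) (snd z)) * indicator A (- z) \<partial>lborel)"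
    unfolding bvn_def by (subst emeasure_density) (auto simp: indicator_def)
  also have "\<dots> = (\<integral>\<^sup>+z. ennreal (bvn_density \<rho> (fst z) (snd z)) * indicator A z \<partial>lborel)"
    by (subst nn_integral_lborel_uminus) (measurable, simp add: bvn_density_uminus)
  also have "\<dots> = emeasure (bvn \<rho>) A"
    unfolding bvn_def by (subst emeasure_density) auto
  finally show ?thesis .
qed

lemma measure_bvn_uminus:
  "A \<in> sets borel \<Longrightarrow> measure (bvn \<rho>) (uminus -` A) = measure (bvn \<rho>) A"
  by (simp add: measure_def emeasure_bvn_uminus)

lemma signal_rescale: "s > 0 \<Longrightarrow> signal k s e = signal k 1 (e / s)"
  unfolding signal_def by (simp add: field_simps)

lemma borel_measurable_signal [measurable]: "signal k s \<in> borel_measurable borel"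
  unfolding signal_def[abs_def] by measurable

lemma abs_signal_le_1: "\<bar>signal k s e\<bar> \<le> 1"
  unfolding signal_def by auto

lemma borel_measurable_signal_fst: "(\<lambda>z::real \<times> real. signal k s (fst z)) \<in> borel_measurable borel"
proof -
  have "(\<lambda>z::real \<times> real. signal k s (fst z)) \<in> borel_measurable (lborel \<Otimes>\<^sub>M lborel)"
    by measurable
  then show ?thesis
    by (simp add: lborel_prod)
qed

lemma borel_measurable_signal_mult:
  "(\<lambda>z::real \<times> real. signal k s (fst z) * signal k s (snd z)) \<in> borel_measurable borel"
proof -
  have "(\<lambda>z::real \<times> real. signal k s (fst z) * signal k s (snd z)) \<in> borel_measurable (lborel \<Otimes>\<^sub>M lborel)"
    by measurable
  then show ?thesis
    by (simp add: lborel_prod)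
qed

lemma integrable_indicator_bvn:
  assumes "prob_space (bvn \<rho>)" "A \<in> sets borel"
  shows "integrable (bvn \<rho>) (indicator A :: _ \<Rightarrow> real)"
proof -
  interpret prob_space "bvn \<rho>" by fact
  show ?thesis
    using assms(2) by (intro integrable_real_indicator) (auto simp: less_top[symmetric])
qed

lemma integral_signal_bvn:
  assumes "prob_space (bvn \<rho>)" and k: "k > 0"
  shows "(\<integral>z. signal k 1 (fst z) \<partial>bvn \<rho>) = 0"
proof -
  interpret prob_space "bvn \<rho>" by fact
  let ?L = "{..-k} \<times> (UNIV :: real set)" and ?R = "{k..} \<times> (UNIV :: real set)"
  have "signal k 1 (fst z) = indicator ?L z - indicator ?R z" for z
    using k by (cases z) (auto simp: signal_def indicator_def)
  moreover have "uminus -` ?R = ?L"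
    by (auto simp: minus_le_iff)
  then have "measure (bvn \<rho>) ?L = measure (bvn \<rho>) ?R"
    using measure_bvn_uminus[of ?R] by (simp add: borel_closed closed_Times)
  ultimately show ?thesis
    by (simp add: integrable_indicator_bvn[OF assms(1)] borel_closed closed_Times)
qed

lemma integral_signal_product_bvn:
  assumes "prob_space (bvn \<rho>)" and k: "k > 0"
  shows "(\<integral>z. signal k 1 (fst z) * signal k 1 (snd z) \<partial>bvn \<rho>)
       = 2 * (measure (bvn \<rho>) ({k..} \<times> {k..}) - measure (bvn \<rho>) ({k..} \<times> {..-k}))"
proof -
  interpret prob_space "bvn \<rho>" by fact
  let ?L = "{..-k} :: real set" and ?R = "{k..} :: real set"
  have "signal k 1 (fst z) * signal k 1 (snd z) = indicator (?L \<times> ?L) z - indicator (?L \<times> ?R) z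
      - indicator (?R \<times> ?L) z + indicator (?R \<times> ?R) z" for z
    using k by (cases z) (auto simp: signal_def indicator_def)
  moreover have "uminus -` (?R \<times> ?R) = ?L \<times> ?L" "uminus -` (?R \<times> ?L) = ?L \<times> ?R"
    by (auto simp: minus_le_iff le_minus_iff)
  then have "measure (bvn \<rho>) (?L \<times> ?L) = measure (bvn \<rho>) (?R \<times> ?R)"
    "measure (bvn \<rho>) (?L \<times> ?R) = measure (bvn \<rho>) (?R \<times> ?L)"
    using measure_bvn_uminus[of "?R \<times> ?R"] measure_bvn_uminus[of "?R \<times> ?L"]
    by (simp_all add: borel_closed closed_Times)
  ultimately show ?thesis
    by (simp add: integrable_indicator_bvn[OF assms(1)] borel_closed closed_Times)
qed

section \<open>Covariance and independent blocks of random variables\<close>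

lemma cov_cong:
  assumes "\<And>w. w \<in> space M \<Longrightarrow> X w = X' w" "\<And>w. w \<in> space M \<Longrightarrow> Y w = Y' w"
  shows "cov M X Y = cov M X' Y'"
  unfolding cov_def using assms by (simp cong: Bochner_Integration.integral_cong)

lemma (in prob_space) cov_mult_indep:
  fixes X Y X' Y' :: "'a \<Rightarrow> real"
  assumes indep_X_Y: "indep_var borel X borel Y"
    and indep_XX'_YY': "indep_var borel (\<lambda>w. X w * X' w) borel (\<lambda>w. Y w * Y' w)"
    and "integrable M X" "integrable M Y"
    and "integrable M (\<lambda>w. X w * X' w)" "integrable M (\<lambda>w. Y w * Y' w)"
    and "expectation X = 0"
  shows "cov M (\<lambda>w. X w * Y w) (\<lambda>w. X' w * Y' w)
       = expectation (\<lambda>w. X w * X' w) * expectation (\<lambda>w. Y w * Y' w)"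
proof -
  have "expectation (\<lambda>w. X w * Y w) = 0"
    using indep_var_lebesgue_integral[OF indep_X_Y] assms by simp
  moreover have "expectation (\<lambda>w. X w * Y w * (X' w * Y' w))
      = expectation (\<lambda>w. X w * X' w) * expectation (\<lambda>w. Y w * Y' w)"
    using indep_var_lebesgue_integral[OF indep_XX'_YY'] assms by (simp add: mult_ac)
  ultimately show ?thesis
    unfolding cov_def by simp
qed

lemma (in prob_space) indep_var_disjoint_blocks:
  assumes "indep_vars (\<lambda>_. N) X I" "A \<inter> B = {}" "A \<subseteq> I" "B \<subseteq> I"
    and "F \<in> measurable (PiM A (\<lambda>_. N)) N'" "G \<in> measurable (PiM B (\<lambda>_. N)) N''"
  shows "indep_var N' (\<lambda>w. F (\<lambda>i\<in>A. X i w)) N'' (\<lambda>w. G (\<lambda>i\<in>B. X i w))"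
  using indep_var_compose[OF indep_var_restrict[OF assms(1-4)] assms(5,6)] by (simp add: comp_def)

lemma (in prob_space) distr_pair_disjoint_blocks:
  assumes "indep_vars (\<lambda>_. N) X I" "A \<inter> B = {}" "A \<subseteq> I" "B \<subseteq> I"
    and [measurable]: "F \<in> measurable (PiM A (\<lambda>_. N)) N'" "G \<in> measurable (PiM B (\<lambda>_. N)) N''"
  shows "distr M N' (\<lambda>w. F (\<lambda>i\<in>A. X i w)) \<Otimes>\<^sub>M distr M N'' (\<lambda>w. G (\<lambda>i\<in>B. X i w))
       = distr M (N' \<Otimes>\<^sub>M N'') (\<lambda>w. (F (\<lambda>i\<in>A. X i w), G (\<lambda>i\<in>B. X i w)))"
proof -
  let ?XA = "\<lambda>w. \<lambda>i\<in>A. X i w" and ?XB = "\<lambda>w. \<lambda>i\<in>B. X i w"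
  have indep: "indep_var (PiM A (\<lambda>_. N)) ?XA (PiM B (\<lambda>_. N)) ?XB"
    by (rule indep_var_restrict[OF assms(1-4)])
  then have [measurable]: "random_variable (PiM A (\<lambda>_. N)) ?XA" "random_variable (PiM B (\<lambda>_. N)) ?XB"
    by (auto dest: indep_var_rv1 indep_var_rv2)
  interpret XB: prob_space "distr (distr M (PiM B (\<lambda>_. N)) ?XB) N'' G"
    by (intro prob_space.prob_space_distr prob_space_distr) simp_all
  have "distr M N' (\<lambda>w. F (?XA w)) \<Otimes>\<^sub>M distr M N'' (\<lambda>w. G (?XB w))
     = distr (distr M (PiM A (\<lambda>_. N)) ?XA) N' F \<Otimes>\<^sub>M distr (distr M (PiM B (\<lambda>_. N)) ?XB) N'' G"
    by (simp add: distr_distr comp_def)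
  also have "\<dots> = distr (distr M (PiM A (\<lambda>_. N)) ?XA \<Otimes>\<^sub>M distr M (PiM B (\<lambda>_. N)) ?XB) (N' \<Otimes>\<^sub>M N'') (\<lambda>(x, y). (F x, G y))"
    by (rule pair_measure_distr) (simp_all add: XB.sigma_finite_measure_axioms)
  also have "\<dots> = distr M (N' \<Otimes>\<^sub>M N'') (\<lambda>w. (F (?XA w), G (?XB w)))"
    using indep by (simp add: indep_var_distribution_eq distr_distr comp_def)
  finally show ?thesis .
qed

lemma borel_measurable_sum_components_PiM:
  assumes "{i} \<times> S \<subseteq> A"
  shows "(\<lambda>f. \<Sum>s\<in>S. f (i, s) :: real) \<in> borel_measurable (PiM A (\<lambda>_. borel))"
  using assms by (intro borel_measurable_sum measurable_component_singleton) auto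

section \<open>The three-stock model\<close>

locale three_stock_log_random_walk = prob_space M
  for M :: "'a measure" and \<delta> p :: "nat \<Rightarrow> nat \<Rightarrow> 'a \<Rightarrow> real" and \<mu> \<sigma> :: "nat \<Rightarrow> real" and c :: real +
  assumes sigma_pos: "\<And>i. i \<in> {1,2,3} \<Longrightarrow> \<sigma> i > 0"
    and indep_shocks: "indep_vars (\<lambda>_. borel) (\<lambda>(i, s). \<delta> i s) ({1,2,3} \<times> {1..})"
    and shock_normal: "\<And>i s. i \<in> {1,2,3} \<Longrightarrow> s \<ge> 1 \<Longrightarrow>
      distributed M lborel (\<delta> i s) (\<lambda>x. ennreal (normal_density 0 (\<sigma> i) x))"
    and price_pos: "\<And>i s w. i \<in> {1,2,3} \<Longrightarrow> w \<in> space M \<Longrightarrow> p i s w > 0"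
    and ln_price_0: "\<And>i w. i \<in> {1,2,3} \<Longrightarrow> w \<in> space M \<Longrightarrow> ln (p i 0 w) = c"
    and ln_price_Suc: "\<And>i s w. i \<in> {1,2,3} \<Longrightarrow> w \<in> space M \<Longrightarrow>
      ln (p i (Suc s) w) = ln (p i s w) + \<mu> i + \<delta> i (Suc s) w"
begin

definition cum_shock :: "nat \<Rightarrow> nat \<Rightarrow> 'a \<Rightarrow> real" where
  "cum_shock i t w = (\<Sum>s = 1..t. \<delta> i s w)"

lemma ln_price_eq:
  assumes "i \<in> {1,2,3}" "w \<in> space M"
  shows "ln (p i t w) = c + real t * \<mu> i + cum_shock i t w"
proof (induction t)
  case 0
  then show ?case using ln_price_0[OF assms] by (simp add: cum_shock_def)
next
  case (Suc t)
  then show ?case using ln_price_Suc[OF assms, of t] by (simp add: cum_shock_def algebra_simps)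
qed

lemma gross_return_eq:
  assumes "i \<in> {1,2,3}" "w \<in> space M"
  shows "p i (t + 1) w / p i t w = exp (\<mu> i + \<delta> i (Suc t) w)"
proof -
  have "p i (t + 1) w / p i t w = exp (ln (p i (Suc t) w) - ln (p i t w))"
    using price_pos[OF assms] by (simp add: exp_diff)
  then show ?thesis
    using ln_price_Suc[OF assms, of t] by simp
qed

lemma borel_measurable_shock [measurable]:
  "i \<in> {1,2,3} \<Longrightarrow> s \<ge> 1 \<Longrightarrow> \<delta> i s \<in> borel_measurable M"
  using distributed_measurable[OF shock_normal[of i s]] by simp

lemma borel_measurable_cum_shock [measurable]:
  "i \<in> {1,2,3} \<Longrightarrow> cum_shock i t \<in> borel_measurable M"
  unfolding cum_shock_def[abs_def] by (intro borel_measurable_sum) auto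

lemma cum_shock_normal:
  assumes i: "i \<in> {1,2,3}" and t: "t \<ge> 1"
  shows "distributed M lborel (cum_shock i t) (normal_density 0 (sqrt (real t * (\<sigma> i)\<^sup>2)))"
proof -
  have sum_slice: "(\<Sum>z\<in>{i} \<times> {1..t}. f z) = (\<Sum>s = 1..t. f (i, s))" for f :: "nat \<times> nat \<Rightarrow> real"
    using sum.cartesian_product[of "\<lambda>x y. f (x, y)" "{1..t}" "{i}"] by simp
  have "indep_vars (\<lambda>_. borel) (\<lambda>(i, s). \<delta> i s) ({i} \<times> {1..t})"
    by (rule indep_vars_subset[OF indep_shocks]) (use i in auto)
  then have "distributed M lborel (\<lambda>w. \<Sum>z\<in>{i} \<times> {1..t}. (\<lambda>(i, s). \<delta> i s) z w)
      (normal_density (\<Sum>z\<in>{i} \<times> {1..t}. 0) (sqrt (\<Sum>z\<in>{i} \<times> {1..t}. (\<sigma> (fst z))\<^sup>2)))"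
    using i t sigma_pos shock_normal by (intro sum_indep_normal) (auto split: prod.split)
  then show ?thesis
    unfolding sum_slice by (simp add: cum_shock_def[abs_def])
qed

lemma indep_cum_shocks_next_shocks:
  fixes F G :: "real \<times> real \<times> real \<Rightarrow> real"
  assumes [measurable]: "F \<in> borel_measurable borel" "G \<in> borel_measurable borel"
  shows "indep_var borel (\<lambda>w. F (cum_shock 1 t w, cum_shock 2 t w, cum_shock 3 t w))
    borel (\<lambda>w. G (\<delta> 1 (Suc t) w, \<delta> 2 (Suc t) w, \<delta> 3 (Suc t) w))"
proof -
  let ?A = "{1::nat, 2, 3} \<times> {1..t}" and ?B = "{1::nat, 2, 3} \<times> {Suc t}"
  have [measurable]: "(\<lambda>f. \<Sum>s = 1..t. f (i, s) :: real) \<in> borel_measurable (PiM ?A (\<lambda>_. borel))"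
    if "i \<in> {1, 2, 3}" for i
    using that by (intro borel_measurable_sum_components_PiM) auto
  have "indep_var borel
      (\<lambda>w. (\<lambda>f. F (\<Sum>s = 1..t. f (1, s), \<Sum>s = 1..t. f (2, s), \<Sum>s = 1..t. f (3, s))) (\<lambda>z\<in>?A. (\<lambda>(i, s). \<delta> i s) z w))
      borel (\<lambda>w. (\<lambda>f. G (f (1, Suc t), f (2, Suc t), f (3, Suc t))) (\<lambda>z\<in>?B. (\<lambda>(i, s). \<delta> i s) z w))"
    by (rule indep_var_disjoint_blocks[OF indep_shocks]) auto
  then show ?thesis
    by (simp add: cum_shock_def)
qed

lemma distr_cum_shock_1_23:
  "distr M lborel (cum_shock 1 t) \<Otimes>\<^sub>M distr M lborel (\<lambda>w. (cum_shock 2 t w, cum_shock 3 t w))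
     = distr M (lborel \<Otimes>\<^sub>M lborel) (\<lambda>w. (cum_shock 1 t w, cum_shock 2 t w, cum_shock 3 t w))"
proof -
  let ?A = "{1::nat} \<times> {1..t}" and ?B = "{2::nat, 3} \<times> {1..t}"
  have [measurable]: "(\<lambda>f. \<Sum>s = 1..t. f (i, s) :: real) \<in> borel_measurable (PiM ?B (\<lambda>_. borel))"
    if "i \<in> {2, 3}" for i
    using that by (intro borel_measurable_sum_components_PiM) auto
  have "distr M lborel (\<lambda>w. (\<lambda>f. \<Sum>s = 1..t. f (1, s)) (\<lambda>z\<in>?A. (\<lambda>(i, s). \<delta> i s) z w))
      \<Otimes>\<^sub>M distr M lborel (\<lambda>w. (\<lambda>f. (\<Sum>s = 1..t. f (2, s), \<Sum>s = 1..t. f (3, s))) (\<lambda>z\<in>?B. (\<lambda>(i, s). \<delta> i s) z w))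
    = distr M (lborel \<Otimes>\<^sub>M lborel) (\<lambda>w. ((\<lambda>f. \<Sum>s = 1..t. f (1, s)) (\<lambda>z\<in>?A. (\<lambda>(i, s). \<delta> i s) z w),
      (\<lambda>f. (\<Sum>s = 1..t. f (2, s), \<Sum>s = 1..t. f (3, s))) (\<lambda>z\<in>?B. (\<lambda>(i, s). \<delta> i s) z w)))"
    by (rule distr_pair_disjoint_blocks[OF indep_shocks])
       (auto intro: borel_measurable_sum_components_PiM)
  then show ?thesis
    by (simp add: cum_shock_def[abs_def])
qed

lemma indep_cum_shock_2_3: "indep_var borel (cum_shock 2 t) borel (cum_shock 3 t)"
proof -
  have "indep_var borel (\<lambda>w. (\<lambda>f. \<Sum>s = 1..t. f (2, s)) (\<lambda>z\<in>{2} \<times> {1..t}. (\<lambda>(i, s). \<delta> i s) z w))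
      borel (\<lambda>w. (\<lambda>f. \<Sum>s = 1..t. f (3, s)) (\<lambda>z\<in>{3} \<times> {1..t}. (\<lambda>(i, s). \<delta> i s) z w))"
    by (rule indep_var_disjoint_blocks[OF indep_shocks])
       (auto intro: borel_measurable_sum_components_PiM)
  then show ?thesis
    by (simp add: cum_shock_def[abs_def])
qed

lemma indep_next_shocks:
  assumes "i \<in> {1,2,3}" "j \<in> {1,2,3}" "i \<noteq> j"
  shows "indep_var borel (\<delta> i (Suc t)) borel (\<delta> j (Suc t))"
proof -
  have "indep_var borel (\<lambda>w. (\<lambda>f. f (i, Suc t)) (\<lambda>z\<in>{(i, Suc t)}. (\<lambda>(i, s). \<delta> i s) z w))
      borel (\<lambda>w. (\<lambda>f. f (j, Suc t)) (\<lambda>z\<in>{(j, Suc t)}. (\<lambda>(i, s). \<delta> i s) z w))"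
    by (rule indep_var_disjoint_blocks[OF indep_shocks]) (use assms in auto)
  then show ?thesis
    by (simp add: restrict_def)
qed

(* In the notation of the paper, std_spread 2 t and std_spread 3 t are the standardised spreads
   epsilon_a / sigma_a and epsilon_b / sigma_b (see pair_return_eq), spread_corr is rho, and
   gross_return i t = 1 + r_(i,t+1). *)
definition std_spread :: "nat \<Rightarrow> nat \<Rightarrow> 'a \<Rightarrow> real" where
  "std_spread j t w = (cum_shock j t w - cum_shock 1 t w) / sqrt (real t * ((\<sigma> 1)\<^sup>2 + (\<sigma> j)\<^sup>2))"

definition spread_corr :: real where
  "spread_corr = (\<sigma> 1)\<^sup>2 / sqrt (((\<sigma> 1)\<^sup>2 + (\<sigma> 2)\<^sup>2) * ((\<sigma> 1)\<^sup>2 + (\<sigma> 3)\<^sup>2))"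

definition gross_return :: "nat \<Rightarrow> nat \<Rightarrow> 'a \<Rightarrow> real" where
  "gross_return i t w = exp (\<mu> i + \<delta> i (Suc t) w)"

lemma distr_std_spreads:
  assumes t: "t \<ge> 1"
  shows "distr M lborel (\<lambda>w. (std_spread 2 t w, std_spread 3 t w)) = bvn spread_corr"
proof -
  define a where "a i = sqrt (real t * (\<sigma> i)\<^sup>2)" for i
  have a_pos: "a i > 0" if "i \<in> {1,2,3}" for i
    using sigma_pos[OF that] t by (simp add: a_def)
  have a_sq: "(a i)\<^sup>2 = real t * (\<sigma> i)\<^sup>2" for i
    by (simp add: a_def)
  have sd: "sqrt (real t * ((\<sigma> 1)\<^sup>2 + (\<sigma> j)\<^sup>2)) = sqrt ((a 1)\<^sup>2 + (a j)\<^sup>2)" for j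
    by (simp add: a_sq algebra_simps)
  have "sqrt (real t * X) * sqrt (real t * Y) = real t * sqrt (X * Y)" for X Y
  proof -
    have "sqrt (real t * X) * sqrt (real t * Y) = sqrt ((real t)\<^sup>2 * (X * Y))"
      by (simp add: real_sqrt_mult[symmetric] power2_eq_square mult_ac)
    then show ?thesis
      by (simp add: real_sqrt_mult)
  qed
  then have corr: "spread_corr = (a 1)\<^sup>2 / (sqrt ((a 1)\<^sup>2 + (a 2)\<^sup>2) * sqrt ((a 1)\<^sup>2 + (a 3)\<^sup>2))"
    unfolding sd[symmetric] unfolding a_sq using t by (simp add: spread_corr_def)
  have "distr M lborel (\<lambda>w. ((cum_shock 2 t w - cum_shock 1 t w) / sqrt ((a 1)\<^sup>2 + (a 2)\<^sup>2),
      (cum_shock 3 t w - cum_shock 1 t w) / sqrt ((a 1)\<^sup>2 + (a 3)\<^sup>2))) = bvn spread_corr"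
    using t a_pos cum_shock_normal distr_cum_shock_1_23 indep_cum_shock_2_3
    by (intro distr_normal_differences_eq_bvn[OF _ _ _ refl refl corr]) (auto simp: a_def)
  then show ?thesis
    unfolding std_spread_def[abs_def] sd .
qed

lemma borel_measurable_std_spread [measurable]:
  "j \<in> {1,2,3} \<Longrightarrow> std_spread j t \<in> borel_measurable M"
  unfolding std_spread_def[abs_def] by measurable

lemma prob_space_bvn_spread_corr: "prob_space (bvn spread_corr)"
proof -
  have "prob_space (distr M lborel (\<lambda>w. (std_spread 2 1 w, std_spread 3 1 w)))"
    by (intro prob_space_distr) simp
  then show ?thesis
    by (simp only: distr_std_spreads[OF order.refl])
qed
lemma
  assumes t: "t \<ge> 1" and k: "k > 0"
  shows expectation_signal_std_spread: "expectation (\<lambda>w. signal k 1 (std_spread 2 t w)) = 0"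
    and expectation_signal_std_spreads_mult:
      "expectation (\<lambda>w. signal k 1 (std_spread 2 t w) * signal k 1 (std_spread 3 t w))
        = 2 * (measure (bvn spread_corr) ({k..} \<times> {k..}) - measure (bvn spread_corr) ({k..} \<times> {..-k}))"
proof -
  have Z: "(\<lambda>w. (std_spread 2 t w, std_spread 3 t w)) \<in> measurable M lborel"
    by simp
  have "expectation (\<lambda>w. signal k 1 (std_spread 2 t w)) = (\<integral>z. signal k 1 (fst z) \<partial>bvn spread_corr)"
    using integral_distr[OF Z, of "\<lambda>z. signal k 1 (fst z)"]
    by (simp add: borel_measurable_signal_fst distr_std_spreads[OF t])
  then show "expectation (\<lambda>w. signal k 1 (std_spread 2 t w)) = 0"
    using integral_signal_bvn[OF prob_space_bvn_spread_corr k] by simp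
  have "expectation (\<lambda>w. signal k 1 (std_spread 2 t w) * signal k 1 (std_spread 3 t w))
      = (\<integral>z. signal k 1 (fst z) * signal k 1 (snd z) \<partial>bvn spread_corr)"
    using integral_distr[OF Z, of "\<lambda>z. signal k 1 (fst z) * signal k 1 (snd z)"]
    by (simp add: borel_measurable_signal_mult distr_std_spreads[OF t])
  then show "expectation (\<lambda>w. signal k 1 (std_spread 2 t w) * signal k 1 (std_spread 3 t w))
      = 2 * (measure (bvn spread_corr) ({k..} \<times> {k..}) - measure (bvn spread_corr) ({k..} \<times> {..-k}))"
    using integral_signal_product_bvn[OF prob_space_bvn_spread_corr k] by simp
qed
lemma
  assumes "i \<in> {1,2,3}"
  shows integrable_gross_return: "integrable M (gross_return i t)"
    and expectation_gross_return: "expectation (gross_return i t) = exp (\<mu> i + (\<sigma> i)\<^sup>2 / 2)"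
    and integrable_gross_return_sq: "integrable M (\<lambda>w. gross_return i t w * gross_return i t w)"
    and expectation_gross_return_sq:
      "expectation (\<lambda>w. gross_return i t w * gross_return i t w) = exp (2 * \<mu> i + 2 * (\<sigma> i)\<^sup>2)"
proof -
  note shock = shock_normal[OF assms, of "Suc t"] and sigma = sigma_pos[OF assms]
  have sq: "gross_return i t w * gross_return i t w = exp (2 * \<mu> i + 2 * \<delta> i (Suc t) w)" for w
    by (simp add: gross_return_def exp_add[symmetric] algebra_simps)
  show "integrable M (gross_return i t)" "expectation (gross_return i t) = exp (\<mu> i + (\<sigma> i)\<^sup>2 / 2)"
    using integrable_exp_affine_normal[OF shock sigma, of "\<mu> i" 1]
      expectation_exp_affine_normal[OF shock sigma, of "\<mu> i" 1]
    by (simp_all add: gross_return_def[abs_def])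
  show "integrable M (\<lambda>w. gross_return i t w * gross_return i t w)"
    "expectation (\<lambda>w. gross_return i t w * gross_return i t w) = exp (2 * \<mu> i + 2 * (\<sigma> i)\<^sup>2)"
    using integrable_exp_affine_normal[OF shock sigma, of "2 * \<mu> i" 2]
      expectation_exp_affine_normal[OF shock sigma, of "2 * \<mu> i" 2]
    by (simp_all add: sq power2_eq_square)
qed

lemma
  assumes "i \<in> {1,2,3}" "j \<in> {1,2,3}" "i \<noteq> j"
  shows integrable_gross_returns_mult: "integrable M (\<lambda>w. gross_return i t w * gross_return j t w)"
    and expectation_gross_returns_mult: "expectation (\<lambda>w. gross_return i t w * gross_return j t w)
      = exp (\<mu> i + (\<sigma> i)\<^sup>2 / 2) * exp (\<mu> j + (\<sigma> j)\<^sup>2 / 2)"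
proof -
  have "indep_var borel (gross_return i t) borel (gross_return j t)"
    using indep_var_compose[OF indep_next_shocks[OF assms, of t], of "\<lambda>x. exp (\<mu> i + x)" borel "\<lambda>x. exp (\<mu> j + x)" borel]
    by (simp add: comp_def gross_return_def[abs_def])
  note indep = this and integrable = integrable_gross_return[OF assms(1)] integrable_gross_return[OF assms(2)]
  show "integrable M (\<lambda>w. gross_return i t w * gross_return j t w)"
    by (rule indep_var_integrable[OF indep integrable])
  show "expectation (\<lambda>w. gross_return i t w * gross_return j t w) = exp (\<mu> i + (\<sigma> i)\<^sup>2 / 2) * exp (\<mu> j + (\<sigma> j)\<^sup>2 / 2)"
    by (simp only: indep_var_lebesgue_integral[OF indep integrable] expectation_gross_return[OF assms(1)]
      expectation_gross_return[OF assms(2)])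
qed

lemma
  shows integrable_return_spreads_mult:
      "integrable M (\<lambda>w. (gross_return 2 t w - gross_return 1 t w) * (gross_return 3 t w - gross_return 1 t w))"
    and expectation_return_spreads_mult:
      "expectation (\<lambda>w. (gross_return 2 t w - gross_return 1 t w) * (gross_return 3 t w - gross_return 1 t w))
        = exp (\<mu> 2 + \<mu> 3 + (\<sigma> 2)\<^sup>2 / 2 + (\<sigma> 3)\<^sup>2 / 2) - exp (\<mu> 1 + \<mu> 3 + (\<sigma> 1)\<^sup>2 / 2 + (\<sigma> 3)\<^sup>2 / 2)
          - exp (\<mu> 1 + \<mu> 2 + (\<sigma> 1)\<^sup>2 / 2 + (\<sigma> 2)\<^sup>2 / 2) + exp (2 * \<mu> 1 + 2 * (\<sigma> 1)\<^sup>2)"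
proof -
  let ?R = "gross_return"
  have expand: "(?R 2 t w - ?R 1 t w) * (?R 3 t w - ?R 1 t w)
      = ?R 2 t w * ?R 3 t w - ?R 1 t w * ?R 3 t w - ?R 1 t w * ?R 2 t w + ?R 1 t w * ?R 1 t w" for w
    by (simp add: algebra_simps)
  note facts = integrable_gross_returns_mult[of 2 3 t] integrable_gross_returns_mult[of 1 3 t]
    integrable_gross_returns_mult[of 1 2 t] integrable_gross_return_sq[of 1 t]
    expectation_gross_returns_mult[of 2 3 t] expectation_gross_returns_mult[of 1 3 t]
    expectation_gross_returns_mult[of 1 2 t] expectation_gross_return_sq[of 1 t]
  show "integrable M (\<lambda>w. (?R 2 t w - ?R 1 t w) * (?R 3 t w - ?R 1 t w))"
    unfolding expand using facts by simp
  show "expectation (\<lambda>w. (?R 2 t w - ?R 1 t w) * (?R 3 t w - ?R 1 t w))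
      = exp (\<mu> 2 + \<mu> 3 + (\<sigma> 2)\<^sup>2 / 2 + (\<sigma> 3)\<^sup>2 / 2) - exp (\<mu> 1 + \<mu> 3 + (\<sigma> 1)\<^sup>2 / 2 + (\<sigma> 3)\<^sup>2 / 2)
        - exp (\<mu> 1 + \<mu> 2 + (\<sigma> 1)\<^sup>2 / 2 + (\<sigma> 2)\<^sup>2 / 2) + exp (2 * \<mu> 1 + 2 * (\<sigma> 1)\<^sup>2)"
    unfolding expand using facts by (simp add: mult_exp_exp add_ac)
qed

lemma indep_std_spreads_gross_returns:
  fixes F :: "real \<times> real \<Rightarrow> real" and G :: "real \<times> real \<times> real \<Rightarrow> real"
  assumes F: "F \<in> borel_measurable borel" and G: "G \<in> borel_measurable borel"
  shows "indep_var borel (\<lambda>w. F (std_spread 2 t w, std_spread 3 t w))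
    borel (\<lambda>w. G (gross_return 1 t w, gross_return 2 t w, gross_return 3 t w))"
proof -
  define sd where "sd j = sqrt (real t * ((\<sigma> 1)\<^sup>2 + (\<sigma> j)\<^sup>2))" for j
  let ?spreads = "\<lambda>u :: real \<times> real \<times> real. ((fst (snd u) - fst u) * inverse (sd 2), (snd (snd u) - fst u) * inverse (sd 3))"
  let ?returns = "\<lambda>d :: real \<times> real \<times> real. (exp (\<mu> 1 + fst d), exp (\<mu> 2 + fst (snd d)), exp (\<mu> 3 + snd (snd d)))"
  have "?spreads \<in> borel_measurable borel"
    by (intro borel_measurable_continuous_onI continuous_intros)
  moreover have "?returns \<in> borel_measurable borel"
    by (intro borel_measurable_continuous_onI continuous_intros)
  ultimately have "indep_var borel (\<lambda>w. (F \<circ> ?spreads) (cum_shock 1 t w, cum_shock 2 t w, cum_shock 3 t w))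
      borel (\<lambda>w. (G \<circ> ?returns) (\<delta> 1 (Suc t) w, \<delta> 2 (Suc t) w, \<delta> 3 (Suc t) w))"
    using F G by (intro indep_cum_shocks_next_shocks measurable_comp)
  then show ?thesis
    by (simp add: std_spread_def gross_return_def sd_def divide_inverse)
qed

lemma pair_return_eq:
  assumes "j \<in> {2, 3}" "w \<in> space M" "t \<ge> 1"
  shows "signal k (sqrt (real t * ((\<sigma> 1)\<^sup>2 + (\<sigma> j)\<^sup>2))) (ln (p j t w) - ln (p 1 t w) - (\<mu> j - \<mu> 1) * real t)
      * (p j (t + 1) w / p j t w - 1 - (p 1 (t + 1) w / p 1 t w - 1))
    = signal k 1 (std_spread j t w) * (gross_return j t w - gross_return 1 t w)"
proof -
  have j: "j \<in> {1,2,3}" and one: "1 \<in> {1,2,3}"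
    using assms(1) by auto
  have "sqrt (real t * ((\<sigma> 1)\<^sup>2 + (\<sigma> j)\<^sup>2)) > 0"
    using assms sigma_pos[of 1] by (simp add: add_pos_nonneg)
  note rescale = signal_rescale[OF this]
  have spread: "ln (p j t w) - ln (p 1 t w) - (\<mu> j - \<mu> 1) * real t = cum_shock j t w - cum_shock 1 t w"
    using ln_price_eq[OF j assms(2)] ln_price_eq[OF one assms(2)] by (simp add: algebra_simps)
  show ?thesis
    unfolding spread rescale gross_return_eq[OF j assms(2)] gross_return_eq[OF one assms(2)]
    by (simp add: std_spread_def gross_return_def)
qed

lemma cov_pair_returns:
  assumes t: "t \<ge> 1" and k: "k > 0"
  shows "cov M
      (\<lambda>w. signal k (sqrt (real t * ((\<sigma> 1)\<^sup>2 + (\<sigma> 2)\<^sup>2))) (ln (p 2 t w) - ln (p 1 t w) - (\<mu> 2 - \<mu> 1) * real t)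
        * (p 2 (t + 1) w / p 2 t w - 1 - (p 1 (t + 1) w / p 1 t w - 1)))
      (\<lambda>w. signal k (sqrt (real t * ((\<sigma> 1)\<^sup>2 + (\<sigma> 3)\<^sup>2))) (ln (p 3 t w) - ln (p 1 t w) - (\<mu> 3 - \<mu> 1) * real t)
        * (p 3 (t + 1) w / p 3 t w - 1 - (p 1 (t + 1) w / p 1 t w - 1)))
    = 2 * (measure (bvn spread_corr) ({k..} \<times> {k..}) - measure (bvn spread_corr) ({k..} \<times> {..-k}))
      * (exp (\<mu> 2 + \<mu> 3 + (\<sigma> 2)\<^sup>2 / 2 + (\<sigma> 3)\<^sup>2 / 2) - exp (\<mu> 1 + \<mu> 3 + (\<sigma> 1)\<^sup>2 / 2 + (\<sigma> 3)\<^sup>2 / 2)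
        - exp (\<mu> 1 + \<mu> 2 + (\<sigma> 1)\<^sup>2 / 2 + (\<sigma> 2)\<^sup>2 / 2) + exp (2 * \<mu> 1 + 2 * (\<sigma> 1)\<^sup>2))"
    (is "cov M ?ra ?rb = ?rhs")
proof -
  define Sa Sb where "Sa w = signal k 1 (std_spread 2 t w)" and "Sb w = signal k 1 (std_spread 3 t w)" for w
  define Ya Yb where "Ya w = gross_return 2 t w - gross_return 1 t w"
    and "Yb w = gross_return 3 t w - gross_return 1 t w" for w
  have [measurable]: "Sa \<in> borel_measurable M" "Sb \<in> borel_measurable M"
    unfolding Sa_def[abs_def] Sb_def[abs_def] by measurable
  have bounded: "integrable M Sa" "integrable M (\<lambda>w. Sa w * Sb w)"
    by (auto intro!: integrable_const_bound[where B = 1] simp: Sa_def Sb_def abs_signal_le_1 abs_mult mult_le_one)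
  have return_spread: "(\<lambda>r::real \<times> real \<times> real. fst (snd r) - fst r) \<in> borel_measurable borel"
    and return_spreads_mult:
      "(\<lambda>r::real \<times> real \<times> real. (fst (snd r) - fst r) * (snd (snd r) - fst r)) \<in> borel_measurable borel"
    by (intro borel_measurable_continuous_onI continuous_intros)+
  have indep_Sa_Ya: "indep_var borel Sa borel Ya"
    using indep_std_spreads_gross_returns[OF borel_measurable_signal_fst return_spread, of k 1 t]
    by (simp add: Sa_def[abs_def] Ya_def[abs_def])
  have indep_SaSb_YaYb: "indep_var borel (\<lambda>w. Sa w * Sb w) borel (\<lambda>w. Ya w * Yb w)"
    using indep_std_spreads_gross_returns[OF borel_measurable_signal_mult return_spreads_mult, of k 1 t]
    by (simp add: Sa_def Sb_def Ya_def Yb_def)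
  have "cov M ?ra ?rb = cov M (\<lambda>w. Sa w * Ya w) (\<lambda>w. Sb w * Yb w)"
    unfolding Sa_def Sb_def Ya_def Yb_def using t by (intro cov_cong pair_return_eq) auto
  also have "\<dots> = expectation (\<lambda>w. Sa w * Sb w) * expectation (\<lambda>w. Ya w * Yb w)"
    using indep_Sa_Ya indep_SaSb_YaYb bounded integrable_gross_return integrable_return_spreads_mult[of t]
      expectation_signal_std_spread[OF t k]
    by (intro cov_mult_indep) (simp_all add: Sa_def[abs_def] Ya_def[abs_def] Yb_def[abs_def])
  also have "\<dots> = ?rhs"
    unfolding Sa_def Sb_def Ya_def Yb_def
    by (simp only: expectation_signal_std_spreads_mult[OF t k] expectation_return_spreads_mult)
  finally show ?thesis .
qed

end

theorem theorem4:
  fixes M :: "'a measure"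
    and \<delta> :: "nat \<Rightarrow> nat \<Rightarrow> 'a \<Rightarrow> real"
    and p :: "nat \<Rightarrow> nat \<Rightarrow> 'a \<Rightarrow> real"
    and \<mu> \<sigma> :: "nat \<Rightarrow> real"
    and k c :: real and t :: nat
  assumes "prob_space M"
    and sigma_pos: "\<And>i. i \<in> {1,2,3} \<Longrightarrow> \<sigma> i > 0"
    and "k > 0"
    and indep: "prob_space.indep_vars M (\<lambda>_. borel) (\<lambda>(i, s). \<delta> i s) ({1,2,3} \<times> {1..})"
    and normal: "\<And>i s. i \<in> {1,2,3} \<Longrightarrow> s \<ge> 1 \<Longrightarrow>
                   distributed M lborel (\<delta> i s) (\<lambda>x. ennreal (normal_density 0 (\<sigma> i) x))"
    and pos: "\<And>i s w. i \<in> {1,2,3} \<Longrightarrow> w \<in> space M \<Longrightarrow> p i s w > 0"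
    and init: "\<And>i w. i \<in> {1,2,3} \<Longrightarrow> w \<in> space M \<Longrightarrow> ln (p i 0 w) = c"
    and step: "\<And>i s w. i \<in> {1,2,3} \<Longrightarrow> w \<in> space M \<Longrightarrow>
                 ln (p i (Suc s) w) = ln (p i s w) + \<mu> i + \<delta> i (Suc s) w"
    and "t \<ge> 1"
  shows
    "let \<epsilon>a = (\<lambda>w. ln (p 2 t w) - ln (p 1 t w) - (\<mu> 2 - \<mu> 1) * real t);
         \<epsilon>b = (\<lambda>w. ln (p 3 t w) - ln (p 1 t w) - (\<mu> 3 - \<mu> 1) * real t);
         \<sigma>a = sqrt (real t * ((\<sigma> 1)\<^sup>2 + (\<sigma> 2)\<^sup>2));
         \<sigma>b = sqrt (real t * ((\<sigma> 1)\<^sup>2 + (\<sigma> 3)\<^sup>2));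
         Sa = (\<lambda>w. signal k \<sigma>a (\<epsilon>a w));
         Sb = (\<lambda>w. signal k \<sigma>b (\<epsilon>b w));
         r = (\<lambda>i w. p i (t + 1) w / p i t w - 1);
         ra = (\<lambda>w. Sa w * (r 2 w - r 1 w));
         rb = (\<lambda>w. Sb w * (r 3 w - r 1 w));
         \<rho> = (\<sigma> 1)\<^sup>2 / sqrt (((\<sigma> 1)\<^sup>2 + (\<sigma> 2)\<^sup>2) * ((\<sigma> 1)\<^sup>2 + (\<sigma> 3)\<^sup>2))
     in cov M ra rb =
        2 * (measure (bvn \<rho>) ({k..} \<times> {k..}) - measure (bvn \<rho>) ({k..} \<times> {..-k}))
          * (exp (\<mu> 2 + \<mu> 3 + (\<sigma> 2)\<^sup>2 / 2 + (\<sigma> 3)\<^sup>2 / 2)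
             - exp (\<mu> 1 + \<mu> 3 + (\<sigma> 1)\<^sup>2 / 2 + (\<sigma> 3)\<^sup>2 / 2)
             - exp (\<mu> 1 + \<mu> 2 + (\<sigma> 1)\<^sup>2 / 2 + (\<sigma> 2)\<^sup>2 / 2)
             + exp (2 * \<mu> 1 + 2 * (\<sigma> 1)\<^sup>2))"
proof -
  interpret three_stock_log_random_walk M \<delta> p \<mu> \<sigma> c
    using assms by (intro three_stock_log_random_walk.intro three_stock_log_random_walk_axioms.intro)
  show ?thesis
    unfolding Let_def spread_corr_def[symmetric] by (rule cov_pair_returns) fact+
qed

end
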